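(* Let $r>0$, $p\in(0,1)$ and let $\boldsymbol{\mu}=(\mu_s)_{s\ge1}$ be the zero-truncated negative binomial distribution $\mu_s=\gamma\,\dfrac{\Gamma(s+r)\,p^s}{\Gamma(r)\,s!}$, $s\ge1$, with $\gamma=\dfrac{(1-p)^r}{1-(1-p)^r}$. Let $\Pi_n\sim ESC_{[n]}(\boldsymbol{\mu})$ with allocation variables $\mathbf{z}$. For $i\in[n]$, with $K_{-i}$ the number of clusters of $\mathbf{z}_{-i}$ and $S_j$ the size of cluster $j$ in $\mathbf{z}_{-i}$, $$\mathbb{P}(z_i=j\mid\mathbf{z}_{-i})\propto\begin{cases}S_j+r, & j=1,\dots,K_{-i},\\ (K_{-i}+1)\,\gamma\, r, & j=K_{-i}+1\ \text{(new cluster)}.\end{cases}$$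
   Context: For a fixed distribution $\boldsymbol{\mu}$ on the positive integers with $\mu_1>0$, $ESC_{[n]}(\boldsymbol{\mu})$ is the law of the following random partition of $[n]$: let $S_1,S_2,\dots$ be i.i.d. with law $\boldsymbol{\mu}$, condition on the event that $\sum_{j=1}^k S_j=n$ for some $k$, let $K$ be that $k$, and let $(z_1,\dots,z_n)$ be a uniformly random permutation of the vector with $S_1$ copies of $1$, ..., $S_K$ copies of $K$; the partition has blocks $\{i:z_i=j\}$. $\mathbf{z}_{-i}$ denotes the allocations of all points other than $i$; the statement concerns which cluster of $\mathbf{z}_{-i}$ point $i$ joins, or whether it forms a new cluster, with proportionality constant independent of $j$. *)

theory Defs
  imports "HOL-Probability.Probability" "HOL-Combinatorics.Permutations"
begin

text \<open>Exchangeable sequence of clusters ESC_[n](mu): draw S_1,...,S_n i.i.d. from M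
 (the event that some partial sum hits n depends only on the first n draws, since all
 S_j are at least 1), condition on the event that some partial sum equals n, let K be
 the corresponding index, and apply a uniformly random permutation of positions to the
 vector with S_1 copies of 1, ..., S_K copies of K.  Points are indexed 0..n-1.\<close>

definition ESC :: "nat \<Rightarrow> nat pmf \<Rightarrow> nat list pmf" where
  "ESC n M =
     bind_pmf (cond_pmf (Pi_pmf {..<n} 0 (\<lambda>_. M)) {S. \<exists>k\<le>n. (\<Sum>j<k. S j) = n})
       (\<lambda>S. let K = (THE k. k \<le> n \<and> (\<Sum>j<k. S j) = n);
                v = concat (map (\<lambda>j. replicate (S j) (Suc j)) [0..<K])
            in map_pmf (\<lambda>\<sigma>. permute_list \<sigma> v) (pmf_of_set {\<sigma>. \<sigma> permutes {..<n}}))"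

definition ztnb_gamma :: "real \<Rightarrow> real \<Rightarrow> real" where
  "ztnb_gamma r p = (1 - p) powr r / (1 - (1 - p) powr r)"

definition ztnb_mu :: "real \<Rightarrow> real \<Rightarrow> nat \<Rightarrow> real" where
  "ztnb_mu r p s =
     (if 1 \<le> s then ztnb_gamma r p * Gamma (real s + r) * p ^ s / (Gamma r * fact s) else 0)"

definition ztnb_pmf :: "real \<Rightarrow> real \<Rightarrow> nat pmf" where
  "ztnb_pmf r p = embed_pmf (ztnb_mu r p)"

text \<open>Allocations of all points other than i (i removed), and order-preserving
 relabelling of cluster labels to 1..K.\<close>

definition del_at :: "nat \<Rightarrow> 'a list \<Rightarrow> 'a list" where
  "del_at i z = take i z @ drop (Suc i) z"

definition compress :: "nat list \<Rightarrow> nat list" where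
  "compress ys = map (\<lambda>y. card {y' \<in> set ys. y' \<le> y}) ys"

end

theory Submission
  imports Defs "HOL-Combinatorics.Multiset_Permutations"
begin

text \<open>Under ESC an allocation z with cluster sizes s_1, ..., s_K arises from the i.i.d.
sizes, with probability \<open>\<Prod>\<mu>(s_j)\<close> up to the conditioning constant, followed by a
uniform arrangement of the labels, which produces z with probability \<open>\<Prod>s_j! / n!\<close>.
Hence P(z) is proportional to the product of the cluster factors \<open>\<mu>(s) s!\<close>.  Removing
point i and putting it back either raises one size s_j to s_j + 1, or opens a singleton
cluster whose label may sit in any of the K + 1 gaps of the order of the old labels.  So the
conditional probabilities are proportional to \<open>\<mu>(s_j+1)(s_j+1)!/(\<mu>(s_j) s_j!)\<close> and to
\<open>(K+1) \<mu>(1)\<close>; for the zero-truncated negative binomial law the recursion of Gamma turns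
these into \<open>(s_j + r) p\<close> and \<open>(K+1) \<gamma> r p\<close>.\<close>

section \<open>Uniform permutations of a list\<close>

lemma card_permute_list_fibre_eq:
  assumes \<sigma>\<^sub>0: "\<sigma>\<^sub>0 permutes {..<length v}" and z: "permute_list \<sigma>\<^sub>0 v = z"
  shows "card {\<sigma>. \<sigma> permutes {..<length v} \<and> permute_list \<sigma> v = z}
       = card {\<sigma>. \<sigma> permutes {..<length v} \<and> permute_list \<sigma> v = v}"
proof -
  let ?N = "{..<length v}"
  have inv: "inv \<sigma>\<^sub>0 permutes ?N" using \<sigma>\<^sub>0 by (simp add: permutes_inv)
  have "bij_betw (\<lambda>\<sigma>. \<sigma> \<circ> \<sigma>\<^sub>0) {\<sigma>. \<sigma> permutes ?N \<and> permute_list \<sigma> v = v}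
          {\<sigma>. \<sigma> permutes ?N \<and> permute_list \<sigma> v = z}"
  proof (rule bij_betw_byWitness[where f' = "\<lambda>\<sigma>. \<sigma> \<circ> inv \<sigma>\<^sub>0"])
    show "\<forall>\<sigma>\<in>{\<sigma>. \<sigma> permutes ?N \<and> permute_list \<sigma> v = v}. (\<sigma> \<circ> \<sigma>\<^sub>0) \<circ> inv \<sigma>\<^sub>0 = \<sigma>"
      using \<sigma>\<^sub>0 by (auto simp: o_assoc[symmetric] permutes_inv_o)
    show "\<forall>\<sigma>\<in>{\<sigma>. \<sigma> permutes ?N \<and> permute_list \<sigma> v = z}. (\<sigma> \<circ> inv \<sigma>\<^sub>0) \<circ> \<sigma>\<^sub>0 = \<sigma>"
      using \<sigma>\<^sub>0 by (auto simp: o_assoc[symmetric] permutes_inv_o)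
    show "(\<lambda>\<sigma>. \<sigma> \<circ> \<sigma>\<^sub>0) ` {\<sigma>. \<sigma> permutes ?N \<and> permute_list \<sigma> v = v}
        \<subseteq> {\<sigma>. \<sigma> permutes ?N \<and> permute_list \<sigma> v = z}"
      using \<sigma>\<^sub>0 z by (auto simp: permutes_compose permute_list_compose)
    show "(\<lambda>\<sigma>. \<sigma> \<circ> inv \<sigma>\<^sub>0) ` {\<sigma>. \<sigma> permutes ?N \<and> permute_list \<sigma> v = z}
        \<subseteq> {\<sigma>. \<sigma> permutes ?N \<and> permute_list \<sigma> v = v}"
    proof (rule image_subsetI)
      fix \<sigma> assume "\<sigma> \<in> {\<sigma>. \<sigma> permutes ?N \<and> permute_list \<sigma> v = z}"
      then have \<sigma>: "\<sigma> permutes ?N" "permute_list \<sigma> v = z" by simp_all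
      have "permute_list (\<sigma> \<circ> inv \<sigma>\<^sub>0) v = permute_list (inv \<sigma>\<^sub>0) (permute_list \<sigma>\<^sub>0 v)"
        using inv \<sigma> z by (simp add: permute_list_compose)
      also have "\<dots> = v"
        using inv \<sigma>\<^sub>0 by (simp add: permute_list_compose[symmetric] permutes_inv_o)
      finally show "\<sigma> \<circ> inv \<sigma>\<^sub>0 \<in> {\<sigma>. \<sigma> permutes ?N \<and> permute_list \<sigma> v = v}"
        using \<sigma> inv by (simp add: permutes_compose)
    qed
  qed
  then show ?thesis by (simp add: bij_betw_same_card)
qed

text \<open>The fibres over the distinct rearrangements of v all have the size of the stabiliser,
and there are \<open>n! / \<Prod> count!\<close> of them.\<close>

lemma card_permute_list_stabiliser:
  "card {\<sigma>. \<sigma> permutes {..<length v} \<and> permute_list \<sigma> v = v}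
     = (\<Prod>x\<in>set_mset (mset v). fact (count (mset v) x))"
proof -
  let ?N = "{..<length v}"
  let ?F = "\<lambda>y. {\<sigma>. \<sigma> permutes ?N \<and> permute_list \<sigma> v = y}"
  let ?PM = "permutations_of_multiset (mset v)"
  have U: "{\<sigma>. \<sigma> permutes ?N} = (\<Union>y\<in>?PM. ?F y)"
    by (auto simp: permutations_of_multisetI)
  have "fact (length v) = card {\<sigma>. \<sigma> permutes ?N}"
    by (simp add: card_permutations)
  also have "\<dots> = (\<Sum>y\<in>?PM. card (?F y))"
    unfolding U by (rule card_UN_disjoint) (auto simp: finite_permutations_of_multiset
          intro: finite_subset[OF _ finite_permutations[of ?N]])
  also have "\<dots> = (\<Sum>y\<in>?PM. card (?F v))"
  proof (rule sum.cong[OF refl])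
    fix y assume "y \<in> ?PM"
    then have "mset y = mset v" by (simp add: permutations_of_multisetD)
    then obtain \<sigma>\<^sub>0 where "\<sigma>\<^sub>0 permutes ?N" "permute_list \<sigma>\<^sub>0 v = y"
      by (metis mset_eq_permutation)
    then show "card (?F y) = card (?F v)" by (rule card_permute_list_fibre_eq)
  qed
  finally have fact_eq: "fact (length v) = card ?PM * card (?F v)" by simp
  have "card ?PM * (\<Prod>x\<in>set_mset (mset v). fact (count (mset v) x)) = fact (length v)"
    using card_permutations_of_multiset_aux[of "mset v"] by simp
  moreover have "card ?PM > 0"
    using finite_permutations_of_multiset[of "mset v"] permutations_of_multisetI[of v "mset v"]
    by (auto simp: card_gt_0_iff)
  ultimately show ?thesis using fact_eq by (metis mult_left_cancel not_gr0)
qed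

lemma pmf_permute_list_uniform:
  assumes "length v = n"
  shows "pmf (map_pmf (\<lambda>\<sigma>. permute_list \<sigma> v) (pmf_of_set {\<sigma>. \<sigma> permutes {..<n}})) z
     = (if mset z = mset v then (\<Prod>x\<in>set z. fact (count (mset z) x)) / fact n else 0)"
proof -
  let ?P = "{\<sigma>. \<sigma> permutes {..<n}}"
  let ?F = "{\<sigma>. \<sigma> permutes {..<length v} \<and> permute_list \<sigma> v = z}"
  have "finite ?P" "?P \<noteq> {}" by (auto intro: finite_permutations permutes_id)
  then have "pmf (map_pmf (\<lambda>\<sigma>. permute_list \<sigma> v) (pmf_of_set ?P)) z
      = card (?P \<inter> (\<lambda>\<sigma>. permute_list \<sigma> v) -` {z}) / card ?P"
    by (simp add: pmf_map measure_pmf_of_set)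
  also have "?P \<inter> (\<lambda>\<sigma>. permute_list \<sigma> v) -` {z} = ?F"
    using assms by auto
  also have "real (card ?P) = fact n" by (simp add: card_permutations)
  finally have pmf_eq: "pmf (map_pmf (\<lambda>\<sigma>. permute_list \<sigma> v) (pmf_of_set ?P)) z = card ?F / fact n" .
  show ?thesis
  proof (cases "mset z = mset v")
    case True
    then obtain \<sigma>\<^sub>0 where \<sigma>\<^sub>0: "\<sigma>\<^sub>0 permutes {..<length v}" "permute_list \<sigma>\<^sub>0 v = z"
      by (metis mset_eq_permutation)
    have "card ?F = (\<Prod>x\<in>set z. fact (count (mset z) x))"
      using card_permute_list_fibre_eq[OF \<sigma>\<^sub>0] card_permute_list_stabiliser[of v] True
      by (metis set_mset_mset)
    then show ?thesis unfolding pmf_eq if_P[OF True] by (simp add: of_nat_prod)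
  next
    case False
    then have "?F = {}" by auto
    with False pmf_eq show ?thesis by simp
  qed
qed

section \<open>The probability of an allocation under ESC\<close>

definition esc_sizes :: "nat \<Rightarrow> nat pmf \<Rightarrow> (nat \<Rightarrow> nat) pmf" where
  "esc_sizes n M = Pi_pmf {..<n} 0 (\<lambda>_. M)"

definition esc_event :: "nat \<Rightarrow> (nat \<Rightarrow> nat) set" where
  "esc_event n = {S. \<exists>k\<le>n. (\<Sum>j<k. S j) = n}"

definition esc_num_clusters :: "nat \<Rightarrow> (nat \<Rightarrow> nat) \<Rightarrow> nat" where
  "esc_num_clusters n S = (THE k. k \<le> n \<and> (\<Sum>j<k. S j) = n)"

definition esc_labels :: "nat \<Rightarrow> (nat \<Rightarrow> nat) \<Rightarrow> nat list" where
  "esc_labels n S = concat (map (\<lambda>j. replicate (S j) (Suc j)) [0..<esc_num_clusters n S])"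

definition allocations :: "nat \<Rightarrow> nat list set" where
  "allocations n = {z. length z = n \<and> set z = {1..card (set z)}}"

definition cluster_factor :: "nat pmf \<Rightarrow> nat \<Rightarrow> real" where
  "cluster_factor M s = pmf M s * fact s"

definition esc_weight :: "nat pmf \<Rightarrow> nat list \<Rightarrow> real" where
  "esc_weight M z = (\<Prod>y\<in>set z. cluster_factor M (count (mset z) y))"

definition esc_norm :: "nat \<Rightarrow> nat pmf \<Rightarrow> real" where
  "esc_norm n M = fact n * measure_pmf.prob (esc_sizes n M) (esc_event n)"

lemma ESC_altdef:
  "ESC n M = bind_pmf (cond_pmf (esc_sizes n M) (esc_event n))
     (\<lambda>S. map_pmf (\<lambda>\<sigma>. permute_list \<sigma> (esc_labels n S)) (pmf_of_set {\<sigma>. \<sigma> permutes {..<n}}))"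
  by (simp add: ESC_def esc_sizes_def esc_event_def esc_num_clusters_def esc_labels_def Let_def)

lemma count_mset_concat_replicate:
  "count (mset (concat (map (\<lambda>j. replicate (S j) (Suc j)) [0..<K]))) x
     = (if 1 \<le> x \<and> x \<le> K then S (x - 1) else 0)"
  by (induction K) auto

lemma length_concat_replicate:
  "length (concat (map (\<lambda>j. replicate (S j) (Suc j)) [0..<K])) = (\<Sum>j<K. S j)"
  by (induction K) auto

lemma sum_lessThan_add_diff_le:
  fixes S :: "nat \<Rightarrow> nat"
  assumes "\<And>j. j < n \<Longrightarrow> 1 \<le> S j" "k \<le> k'" "k' \<le> n"
  shows "(\<Sum>j<k. S j) + (k' - k) \<le> (\<Sum>j<k'. S j)"
  using assms(2,3)
proof (induction k' rule: dec_induct)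
  case (step m)
  then have "1 \<le> S m" using assms(1) by simp
  with step show ?case by (simp add: Suc_diff_le)
qed simp

lemma esc_num_clusters_eq:
  assumes "\<And>j. j < n \<Longrightarrow> 1 \<le> S j" "k \<le> n" "(\<Sum>j<k. S j) = n"
  shows "esc_num_clusters n S = k"
  unfolding esc_num_clusters_def
proof (rule the_equality)
  fix k' assume k': "k' \<le> n \<and> (\<Sum>j<k'. S j) = n"
  show "k' = k"
  proof (rule ccontr)
    assume "k' \<noteq> k"
    then consider "k < k'" | "k' < k" by linarith
    then show False
      by cases (use sum_lessThan_add_diff_le[of n S k k'] sum_lessThan_add_diff_le[of n S k' k]
                    assms k' in auto)
  qed
qed (use assms in simp)

lemma esc_sizes_pos:
  assumes "S \<in> set_pmf (esc_sizes n M)" "pmf M 0 = 0" "j < n"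
  shows "1 \<le> S j"
proof -
  have "set_pmf (esc_sizes n M) = PiE_dflt {..<n} 0 (set_pmf \<circ> (\<lambda>_. M))"
    unfolding esc_sizes_def by (rule set_Pi_pmf) simp
  then have "S j \<in> set_pmf M" using assms(1,3) by (auto simp: PiE_dflt_def)
  moreover have "0 \<notin> set_pmf M" using assms(2) by (simp add: set_pmf_iff)
  ultimately show ?thesis by (metis less_one not_le)
qed

lemma esc_labels_on_support:
  assumes "S \<in> set_pmf (esc_sizes n M)" "pmf M 0 = 0" "S \<in> esc_event n"
  shows "length (esc_labels n S) = n"
    "\<And>x. count (mset (esc_labels n S)) x
       = (if 1 \<le> x \<and> x \<le> esc_num_clusters n S then S (x - 1) else 0)"
    "set (esc_labels n S) = {1..esc_num_clusters n S}"
proof -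
  note pos = esc_sizes_pos[OF assms(1,2)]
  obtain k where k: "k \<le> n" "(\<Sum>j<k. S j) = n" using assms(3) by (auto simp: esc_event_def)
  have K: "esc_num_clusters n S = k" by (rule esc_num_clusters_eq[OF pos k])
  show "length (esc_labels n S) = n" using k K by (simp add: esc_labels_def length_concat_replicate)
  show count: "\<And>x. count (mset (esc_labels n S)) x
       = (if 1 \<le> x \<and> x \<le> esc_num_clusters n S then S (x - 1) else 0)"
    by (simp add: esc_labels_def count_mset_concat_replicate)
  show "set (esc_labels n S) = {1..esc_num_clusters n S}"
  proof (rule set_eqI)
    fix x
    have "x \<in> set (esc_labels n S) \<longleftrightarrow> 0 < count (mset (esc_labels n S)) x" by simp
    also have "\<dots> \<longleftrightarrow> x \<in> {1..esc_num_clusters n S}"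
    proof (cases "1 \<le> x \<and> x \<le> k")
      case True
      then have "x - 1 < n" using k(1) by linarith
      then have "1 \<le> S (x - 1)" by (rule pos)
      then show ?thesis using count[of x] K True by auto
    qed (use count[of x] K in auto)
    finally show "x \<in> set (esc_labels n S) \<longleftrightarrow> x \<in> {1..esc_num_clusters n S}" .
  qed
qed

lemma set_pmf_esc_sizes_Int_esc_event:
  assumes "0 < pmf M 1"
  shows "set_pmf (esc_sizes n M) \<inter> esc_event n \<noteq> {}"
proof -
  define S\<^sub>1 :: "nat \<Rightarrow> nat" where "S\<^sub>1 = (\<lambda>j. if j < n then 1 else 0)"
  have "pmf (esc_sizes n M) S\<^sub>1 = (\<Prod>x<n. pmf M (S\<^sub>1 x))"
    unfolding esc_sizes_def by (subst pmf_Pi) (auto simp: S\<^sub>1_def)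
  also have "\<dots> > 0" using assms by (intro prod_pos) (simp add: S\<^sub>1_def)
  finally have "S\<^sub>1 \<in> set_pmf (esc_sizes n M)" by (simp add: set_pmf_iff)
  moreover have "S\<^sub>1 \<in> esc_event n"
    unfolding esc_event_def S\<^sub>1_def by (intro CollectI exI[of _ n]) simp
  ultimately show ?thesis by blast
qed

lemma prob_esc_event_pos:
  assumes "0 < pmf M 1"
  shows "0 < measure_pmf.prob (esc_sizes n M) (esc_event n)"
proof -
  obtain S where "S \<in> set_pmf (esc_sizes n M)" "S \<in> esc_event n"
    using set_pmf_esc_sizes_Int_esc_event[OF assms] by blast
  then show ?thesis by (rule measure_pmf_posI)
qed

lemma esc_norm_pos: "0 < pmf M 1 \<Longrightarrow> 0 < esc_norm n M"
  using prob_esc_event_pos by (simp add: esc_norm_def)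

lemma pmf_ESC_cond:
  assumes "pmf M 0 = 0" "0 < pmf M 1"
  shows "pmf (ESC n M) z = (\<Prod>x\<in>set z. fact (count (mset z) x)) / fact n *
     (measure_pmf.prob (esc_sizes n M) (esc_event n \<inter> {S. mset z = mset (esc_labels n S)})
      / measure_pmf.prob (esc_sizes n M) (esc_event n))"
proof -
  define P where "P = esc_sizes n M"
  define E where "E = esc_event n"
  define F where "F = {S. mset z = mset (esc_labels n S)}"
  define c where "c = (\<Prod>x\<in>set z. fact (count (mset z) x)) / (fact n :: real)"
  have hit: "set_pmf P \<inter> E \<noteq> {}"
    using set_pmf_esc_sizes_Int_esc_event[OF assms(2)] by (simp add: P_def E_def)
  have "pmf (ESC n M) z = (\<integral>S. pmf (map_pmf (\<lambda>\<sigma>. permute_list \<sigma> (esc_labels n S))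
           (pmf_of_set {\<sigma>. \<sigma> permutes {..<n}})) z \<partial>measure_pmf (cond_pmf P E))"
    by (simp add: ESC_altdef pmf_bind P_def E_def)
  also have "\<dots> = (\<integral>S. c * indicator F S \<partial>measure_pmf (cond_pmf P E))"
  proof (intro integral_cong_AE AE_pmfI)
    fix S assume "S \<in> set_pmf (cond_pmf P E)"
    then have "S \<in> set_pmf P" "S \<in> E" using hit by auto
    then have "length (esc_labels n S) = n"
      using esc_labels_on_support(1) assms(1) by (simp add: P_def E_def)
    then show "pmf (map_pmf (\<lambda>\<sigma>. permute_list \<sigma> (esc_labels n S))
        (pmf_of_set {\<sigma>. \<sigma> permutes {..<n}})) z = c * indicator F S"
      by (simp add: pmf_permute_list_uniform F_def c_def)
  qed simp_all
  also have "\<dots> = c * measure_pmf.prob (cond_pmf P E) F" by simp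
  also have "measure_pmf.prob (cond_pmf P E) F
      = measure_pmf.prob P (E \<inter> F) / measure_pmf.prob P E"
    using hit prob_esc_event_pos[OF assms(2), of n]
    by (simp add: P_def E_def cond_pmf.rep_eq measure_uniform_measure measure_pmf.emeasure_eq_measure)
  finally show ?thesis by (simp add: P_def E_def F_def c_def)
qed

lemma esc_labels_mset_eq_allocation:
  assumes "S \<in> set_pmf (esc_sizes n M)" "pmf M 0 = 0" "S \<in> esc_event n"
    and "mset z = mset (esc_labels n S)"
  shows "z \<in> allocations n" "esc_num_clusters n S = card (set z)"
    "\<And>j. j < card (set z) \<Longrightarrow> S j = count (mset z) (Suc j)"
proof -
  note props = esc_labels_on_support[OF assms(1-3)]
  have set_z: "set z = {1..esc_num_clusters n S}"
    using assms(4) props(3) by (metis set_mset_mset)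
  show "z \<in> allocations n" "esc_num_clusters n S = card (set z)"
    using set_z props(1) assms(4) by (auto simp: allocations_def dest: mset_eq_length)
  show "\<And>j. j < card (set z) \<Longrightarrow> S j = count (mset z) (Suc j)"
    using set_z props(2) assms(4) by simp
qed

lemma sum_count_allocation:
  assumes "set z = {1..K}"
  shows "(\<Sum>j<K. count (mset z) (Suc j)) = length z"
proof -
  have "(\<Sum>j<K. count (mset z) (Suc j)) = (\<Sum>y\<in>Suc ` {..<K}. count (mset z) y)"
    by (simp add: sum.reindex)
  also have "Suc ` {..<K} = set_mset (mset z)" using assms by (simp add: image_Suc_lessThan)
  also have "(\<Sum>y\<in>set_mset (mset z). count (mset z) y) = size (mset z)"
    by (simp add: size_multiset_overloaded_eq)
  finally show ?thesis by simp
qed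

text \<open>On the support of the sizes, \<open>mset z = mset (esc_labels n S)\<close> just fixes the first
\<open>card (set z)\<close> sizes to the cluster sizes of z, a cylinder set of the product measure.\<close>

lemma prob_esc_labels_eq:
  assumes M0: "pmf M 0 = 0" and z: "z \<in> allocations n"
  shows "measure_pmf.prob (esc_sizes n M) (esc_event n \<inter> {S. mset z = mset (esc_labels n S)})
       = (\<Prod>y\<in>set z. pmf M (count (mset z) y))"
proof -
  define K where "K = card (set z)"
  have set_z: "set z = {1..K}" and len: "length z = n"
    using z by (simp_all add: allocations_def K_def)
  have Kn: "K \<le> n" using len card_length[of z] by (simp add: K_def)
  define B where "B = (\<lambda>j. if j < K then {count (mset z) (Suc j)} else (UNIV :: nat set))"
  have "measure_pmf.prob (esc_sizes n M) (esc_event n \<inter> {S. mset z = mset (esc_labels n S)})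
      = measure_pmf.prob (esc_sizes n M) (Pi {..<n} B)"
  proof (rule measure_prob_cong_0)
    fix S assume "S \<in> esc_event n \<inter> {S. mset z = mset (esc_labels n S)} - Pi {..<n} B"
    then show "pmf (esc_sizes n M) S = 0"
      using esc_labels_mset_eq_allocation(3)[of S n M z] M0
      by (auto simp: set_pmf_iff B_def K_def)
  next
    fix S assume S: "S \<in> Pi {..<n} B - esc_event n \<inter> {S. mset z = mset (esc_labels n S)}"
    show "pmf (esc_sizes n M) S = 0"
    proof (rule ccontr)
      assume "pmf (esc_sizes n M) S \<noteq> 0"
      then have supp: "S \<in> set_pmf (esc_sizes n M)" by (simp add: set_pmf_iff)
      have S_eq: "S j = count (mset z) (Suc j)" if "j < K" for j
      proof -
        have "S j \<in> B j" using S that Kn by (auto simp: Pi_iff)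
        then show ?thesis using that by (simp add: B_def)
      qed
      have sum_S: "(\<Sum>j<K. S j) = n"
        using S_eq sum_count_allocation[OF set_z] len by simp
      then have event: "S \<in> esc_event n" using Kn by (auto simp: esc_event_def)
      note props = esc_labels_on_support[OF supp M0 event]
      have K_eq: "esc_num_clusters n S = K"
        by (rule esc_num_clusters_eq[OF esc_sizes_pos[OF supp M0] Kn sum_S])
      have "mset z = mset (esc_labels n S)"
      proof (rule multiset_eqI)
        fix x
        show "count (mset z) x = count (mset (esc_labels n S)) x"
          using props(2)[of x] K_eq S_eq[of "x - 1"] set_z count_mset_0_iff[of z x]
          by (cases "1 \<le> x \<and> x \<le> K") auto
      qed
      with S event show False by simp
    qed
  qed
  also have "\<dots> = (\<Prod>j<n. measure_pmf.prob M (B j))"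
    unfolding esc_sizes_def by (rule measure_Pi_pmf_Pi) simp
  also have "\<dots> = (\<Prod>j<K. measure_pmf.prob M (B j))"
    by (rule prod.mono_neutral_right) (use Kn in \<open>auto simp: B_def\<close>)
  also have "\<dots> = (\<Prod>j<K. pmf M (count (mset z) (Suc j)))"
    by (intro prod.cong) (auto simp: B_def measure_pmf_single)
  also have "\<dots> = (\<Prod>y\<in>Suc ` {..<K}. pmf M (count (mset z) y))"
    by (simp add: prod.reindex)
  also have "Suc ` {..<K} = set z" using set_z by (simp add: image_Suc_lessThan)
  finally show ?thesis .
qed

lemma pmf_ESC:
  assumes M0: "pmf M 0 = 0" and M1: "0 < pmf M 1"
  shows "pmf (ESC n M) z = (if z \<in> allocations n then esc_weight M z / esc_norm n M else 0)"
proof (cases "z \<in> allocations n")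
  case True
  then show ?thesis
    using pmf_ESC_cond[OF M0 M1, of n z] prob_esc_labels_eq[OF M0 True]
    by (simp add: esc_weight_def esc_norm_def cluster_factor_def prod.distrib)
next
  case False
  have "measure_pmf.prob (esc_sizes n M) (esc_event n \<inter> {S. mset z = mset (esc_labels n S)})
      = measure_pmf.prob (esc_sizes n M) {}"
    by (rule measure_prob_cong_0)
       (use False esc_labels_mset_eq_allocation(1)[of _ n M z] M0 in \<open>auto simp: set_pmf_iff\<close>)
  then show ?thesis using pmf_ESC_cond[OF M0 M1, of n z] False by simp
qed

lemma finite_allocations: "finite (allocations n)"
proof (rule finite_subset)
  show "allocations n \<subseteq> {xs. set xs \<subseteq> {..n} \<and> length xs = n}"
  proof
    fix z assume z: "z \<in> allocations n"
    define K where "K = card (set z)"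
    have "length z = n" "set z = {1..K}" using z by (simp_all add: allocations_def K_def)
    moreover have "K \<le> length z" unfolding K_def by (rule card_length)
    ultimately show "z \<in> {xs. set xs \<subseteq> {..n} \<and> length xs = n}" by auto
  qed
qed (rule finite_lists_length_eq, simp)

lemma prob_ESC:
  assumes "pmf M 0 = 0" "0 < pmf M 1"
  shows "measure_pmf.prob (ESC n M) B = (\<Sum>z\<in>B \<inter> allocations n. esc_weight M z) / esc_norm n M"
proof -
  have "measure_pmf.prob (ESC n M) B = measure_pmf.prob (ESC n M) (B \<inter> allocations n)"
    by (rule measure_prob_cong_0) (auto simp: pmf_ESC[OF assms])
  also have "\<dots> = (\<Sum>z\<in>B \<inter> allocations n. pmf (ESC n M) z)"
    using finite_allocations by (simp add: measure_measure_pmf_finite)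
  also have "\<dots> = (\<Sum>z\<in>B \<inter> allocations n. esc_weight M z / esc_norm n M)"
    by (intro sum.cong) (auto simp: pmf_ESC[OF assms])
  finally show ?thesis by (simp add: sum_divide_distrib)
qed

section \<open>Removing and reinserting one point\<close>

definition insert_at :: "nat \<Rightarrow> 'a \<Rightarrow> 'a list \<Rightarrow> 'a list" where
  "insert_at i x ys = take i ys @ x # drop i ys"

definition skip_label :: "nat \<Rightarrow> nat \<Rightarrow> nat" where
  "skip_label l y = (if l \<le> y then Suc y else y)"

definition unskip_label :: "nat \<Rightarrow> nat \<Rightarrow> nat" where
  "unskip_label l y = (if l < y then y - 1 else y)"

lemma skip_label_le_iff: "skip_label l a \<le> skip_label l b \<longleftrightarrow> a \<le> b"
  by (auto simp: skip_label_def)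

lemma inj_skip_label: "inj (skip_label l)"
  by (auto simp: inj_def skip_label_def split: if_splits)

lemma skip_unskip_label: "y \<noteq> l \<Longrightarrow> skip_label l (unskip_label l y) = y"
  by (auto simp: skip_label_def unskip_label_def)

lemma insert_image_skip_label: "l \<in> {1..L + 1} \<Longrightarrow> insert l (skip_label l ` {1..L}) = {1..L + 1}"
proof (rule set_eqI, rule iffI)
  fix x assume "l \<in> {1..L + 1}" "x \<in> {1..L + 1}"
  then consider "x = l" | "x < l" "x \<in> {1..L}" | "l < x" "x - 1 \<in> {1..L}" by force
  then show "x \<in> insert l (skip_label l ` {1..L})"
    by cases (auto simp: skip_label_def image_iff intro: bexI[of _ "x - 1"] bexI[of _ x])
qed (auto simp: skip_label_def)

lemma compress_id:
  assumes "set ys = {1..m}"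
  shows "compress ys = ys"
proof -
  have "card {y' \<in> set ys. y' \<le> y} = y" if "y \<in> set ys" for y
  proof -
    have "{y' \<in> set ys. y' \<le> y} = {1..y}" using assms that by auto
    then show ?thesis by simp
  qed
  then show ?thesis unfolding compress_def by (intro map_idI) auto
qed

lemma compress_map_skip_label:
  assumes "set xs = {1..m}"
  shows "compress (map (skip_label l) xs) = xs"
proof -
  have "card {y' \<in> set (map (skip_label l) xs). y' \<le> skip_label l y} = y" if "y \<in> set xs" for y
  proof -
    have "{y' \<in> set (map (skip_label l) xs). y' \<le> skip_label l y} = skip_label l ` {1..y}"
      using assms that by (auto simp: skip_label_le_iff)
    also have "card \<dots> = y" using inj_skip_label[of l] by (simp add: card_image inj_on_subset)
    finally show ?thesis .
  qed
  then show ?thesis unfolding compress_def by (simp add: map_idI)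
qed

lemma length_compress [simp]: "length (compress ys) = length ys"
  by (simp add: compress_def)

lemma del_at_insert_at: "i \<le> length ys \<Longrightarrow> del_at i (insert_at i x ys) = ys"
  by (simp add: del_at_def insert_at_def)

lemma nth_insert_at: "i \<le> length ys \<Longrightarrow> insert_at i x ys ! i = x"
  by (simp add: insert_at_def nth_append)

lemma length_insert_at: "length (insert_at i x ys) = Suc (length ys)"
  by (simp add: insert_at_def)

lemma set_insert_at: "set (insert_at i x ys) = insert x (set ys)"
  by (simp add: insert_at_def)
     (metis append_take_drop_id set_append Un_commute Un_assoc insert_is_Un Un_insert_left)

lemma mset_insert_at: "mset (insert_at i x ys) = add_mset x (mset ys)"
  by (simp add: insert_at_def) (metis append_take_drop_id mset_append union_mset_add_mset_right)

lemma insert_at_nth_del_at: "i < length z \<Longrightarrow> insert_at i (z ! i) (del_at i z) = z"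
  by (simp add: insert_at_def del_at_def min_def id_take_nth_drop[symmetric])

lemma set_nth_del_at: "i < length z \<Longrightarrow> set z = insert (z ! i) (set (del_at i z))"
  using set_insert_at[of i "z ! i" "del_at i z"] insert_at_nth_del_at[of i z] by simp

lemma del_at_old_cluster:
  assumes "i < length z" "set z = {1..K}" "z ! i \<in> set (del_at i z)"
  shows "set (del_at i z) = {1..K}" "compress (del_at i z) = del_at i z"
proof -
  show set_eq: "set (del_at i z) = {1..K}" using set_nth_del_at[OF assms(1)] assms by auto
  show "compress (del_at i z) = del_at i z" by (rule compress_id[OF set_eq])
qed

lemma del_at_new_cluster:
  assumes "i < length z" "set z = {1..K}" "z ! i \<notin> set (del_at i z)"
  defines "w \<equiv> map (unskip_label (z ! i)) (del_at i z)"
  shows "z ! i \<in> {1..K}" "del_at i z = map (skip_label (z ! i)) w" "set w = {1..K - 1}"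
    "compress (del_at i z) = w"
proof -
  let ?l = "z ! i"
  have set_z: "set z = insert ?l (set (del_at i z))" using set_nth_del_at[OF assms(1)] .
  show l: "?l \<in> {1..K}" using set_z assms(2) by auto
  have set_del: "set (del_at i z) = {1..K} - {?l}" using set_z assms(2,3) by auto
  have "map (skip_label ?l \<circ> unskip_label ?l) (del_at i z) = del_at i z"
    by (rule map_idI) (simp add: skip_unskip_label set_del)
  then show del_eq: "del_at i z = map (skip_label ?l) w"
    unfolding w_def by simp
  have "set w = unskip_label ?l ` ({1..K} - {?l})" by (simp add: w_def set_del)
  also have "\<dots> = {1..K - 1}"
  proof (rule set_eqI, rule iffI)
    fix x assume "x \<in> {1..K - 1}"
    then have "x \<in> {1..K} - {?l} \<and> unskip_label ?l x = x \<or>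
               Suc x \<in> {1..K} - {?l} \<and> unskip_label ?l (Suc x) = x"
      using l by (auto simp: unskip_label_def)
    then show "x \<in> unskip_label ?l ` ({1..K} - {?l})" by (metis image_eqI)
  qed (use l in \<open>auto simp: unskip_label_def\<close>)
  finally show set_w: "set w = {1..K - 1}" .
  show "compress (del_at i z) = w" using del_eq compress_map_skip_label[OF set_w] by simp
qed

lemma compress_del_at_allocation:
  assumes "z \<in> allocations n" "i < n"
  shows "compress (del_at i z) \<in> allocations (n - 1)"
proof -
  have z: "length z = n" "set z = {1..card (set z)}" using assms(1) by (simp_all add: allocations_def)
  have "set (compress (del_at i z)) = {1..card (set (compress (del_at i z)))}"
  proof (cases "z ! i \<in> set (del_at i z)")
    case True
    from del_at_old_cluster[OF _ z(2) True] z assms(2) show ?thesis by simp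
  next
    case False
    from del_at_new_cluster[OF _ z(2) False] z assms(2) show ?thesis by simp
  qed
  then show ?thesis using z assms(2) by (simp add: allocations_def del_at_def)
qed

text \<open>Given the relabelled allocation w of the other points, point i either repeats a label
of w, which pins z down completely, or gets a fresh label l, in which case the old labels
\<open>\<ge> l\<close> are shifted up by one.\<close>

lemma join_cluster_allocations:
  assumes w: "w \<in> allocations (n - 1)" and i: "i < n" and j: "j \<in> {1..card (set w)}"
  shows "{z. compress (del_at i z) = w \<and> (\<exists>m<length w. w ! m = j \<and> z ! i = del_at i z ! m)}
     \<inter> allocations n = {insert_at i j w}"
proof (rule set_eqI, rule iffI)
  fix z
  assume "z \<in> {z. compress (del_at i z) = w \<and> (\<exists>m<length w. w ! m = j \<and> z ! i = del_at i z ! m)}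
     \<inter> allocations n"
  then obtain m where z: "compress (del_at i z) = w" "m < length w" "w ! m = j"
    "z ! i = del_at i z ! m" "length z = n" "set z = {1..card (set z)}"
    by (auto simp: allocations_def)
  have il: "i < length z" using z i by simp
  have "z ! i \<in> set (del_at i z)"
    using z(1,2,4) length_compress[of "del_at i z"] by (metis nth_mem)
  from del_at_old_cluster[OF il z(6) this] z(1) have del: "del_at i z = w" by simp
  then have "z ! i = j" using z by simp
  then show "z \<in> {insert_at i j w}" using insert_at_nth_del_at[OF il] del by simp
next
  fix z assume "z \<in> {insert_at i j w}"
  then have z: "z = insert_at i j w" by simp
  have set_w: "set w = {1..card (set w)}" and il: "i \<le> length w"
    using w i by (auto simp: allocations_def)
  obtain m where "m < length w" "w ! m = j" using j set_w by (metis in_set_conv_nth)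
  moreover have "z \<in> allocations n"
    using z w i j by (auto simp: allocations_def length_insert_at set_insert_at insert_absorb)
  ultimately show "z \<in> {z. compress (del_at i z) = w \<and>
      (\<exists>m<length w. w ! m = j \<and> z ! i = del_at i z ! m)} \<inter> allocations n"
    using z del_at_insert_at[OF il] nth_insert_at[OF il] compress_id[OF set_w] by auto
qed

lemma new_cluster_allocations:
  assumes w: "w \<in> allocations (n - 1)" and i: "i < n"
  shows "{z. compress (del_at i z) = w \<and> z ! i \<notin> set (del_at i z)} \<inter> allocations n
     = (\<lambda>l. insert_at i l (map (skip_label l) w)) ` {1..card (set w) + 1}"
proof (rule set_eqI, rule iffI)
  have set_w: "set w = {1..card (set w)}" and len_w: "length w = n - 1"
    using w by (simp_all add: allocations_def)
  fix z assume "z \<in> {z. compress (del_at i z) = w \<and> z ! i \<notin> set (del_at i z)} \<inter> allocations n"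
  then have z: "compress (del_at i z) = w" "z ! i \<notin> set (del_at i z)" "length z = n"
    "set z = {1..card (set z)}" by (auto simp: allocations_def)
  have il: "i < length z" using z i by simp
  note new = del_at_new_cluster[OF il z(4) z(2)]
  have w_eq: "map (unskip_label (z ! i)) (del_at i z) = w" using new(4) z(1) by simp
  have "{1..card (set z) - 1} = {1..card (set w)}" using new(3) w_eq set_w by simp
  then have card_z: "card (set z) = card (set w) + 1" using new(1) by fastforce
  have "z = insert_at i (z ! i) (del_at i z)" using insert_at_nth_del_at[OF il] by simp
  also have "del_at i z = map (skip_label (z ! i)) w" using new(2) w_eq by simp
  finally show "z \<in> (\<lambda>l. insert_at i l (map (skip_label l) w)) ` {1..card (set w) + 1}"
    using new(1) card_z by auto
next
  have set_w: "set w = {1..card (set w)}" and len_w: "length w = n - 1"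
    using w by (simp_all add: allocations_def)
  fix z assume "z \<in> (\<lambda>l. insert_at i l (map (skip_label l) w)) ` {1..card (set w) + 1}"
  then obtain l where l: "l \<in> {1..card (set w) + 1}"
    and z: "z = insert_at i l (map (skip_label l) w)" by auto
  have il: "i \<le> length (map (skip_label l) w)" using len_w i by simp
  have "set z = {1..card (set w) + 1}"
    using z insert_image_skip_label[OF l] set_w by (simp add: set_insert_at)
  then have "z \<in> allocations n" using z len_w i by (simp add: allocations_def length_insert_at)
  moreover have "l \<notin> set (map (skip_label l) w)" by (auto simp: skip_label_def)
  ultimately show "z \<in> {z. compress (del_at i z) = w \<and> z ! i \<notin> set (del_at i z)} \<inter> allocations n"
    using z del_at_insert_at[OF il] nth_insert_at[OF il] compress_map_skip_label[OF set_w] by auto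
qed

section \<open>The conditional law of one allocation variable\<close>

lemma esc_weight_insert_at_old:
  assumes "j \<in> set w"
  shows "esc_weight M (insert_at i j w) * cluster_factor M (count (mset w) j)
       = esc_weight M w * cluster_factor M (Suc (count (mset w) j))"
proof -
  define R where "R = (\<Prod>y\<in>set w - {j}. cluster_factor M (count (mset w) y))"
  have "set (insert_at i j w) = set w" using assms by (auto simp: set_insert_at)
  then have "esc_weight M (insert_at i j w) = cluster_factor M (Suc (count (mset w) j)) * R"
    using assms by (simp add: esc_weight_def prod.remove mset_insert_at R_def)
  moreover have "esc_weight M w = cluster_factor M (count (mset w) j) * R"
    using assms by (simp add: esc_weight_def prod.remove R_def)
  ultimately show ?thesis by simp
qed

lemma esc_weight_insert_at_new:
  "esc_weight M (insert_at i l (map (skip_label l) w)) = cluster_factor M 1 * esc_weight M w"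
proof -
  let ?v = "map (skip_label l) w"
  have l: "l \<notin> set ?v" by (auto simp: skip_label_def)
  then have "count (mset ?v) l = 0" by (metis count_mset_0_iff)
  then have count_l: "count (add_mset l (mset ?v)) l = 1" by simp
  have count_v: "count (mset ?v) (skip_label l x) = count (mset w) x" for x
    by (induction w) (auto simp: inj_eq[OF inj_skip_label])
  have "esc_weight M (insert_at i l ?v)
      = (\<Prod>y\<in>insert l (set ?v). cluster_factor M (count (add_mset l (mset ?v)) y))"
    by (simp only: esc_weight_def set_insert_at mset_insert_at)
  also have "\<dots> = cluster_factor M 1 *
      (\<Prod>y\<in>set ?v. cluster_factor M (count (add_mset l (mset ?v)) y))"
    by (simp only: prod.insert[OF finite_set l] count_l)
  also have "(\<Prod>y\<in>set ?v. cluster_factor M (count (add_mset l (mset ?v)) y))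
      = (\<Prod>y\<in>set ?v. cluster_factor M (count (mset ?v) y))"
    using l by (intro prod.cong refl) auto
  also have "\<dots> = (\<Prod>x\<in>set w. cluster_factor M (count (mset ?v) (skip_label l x)))"
    unfolding set_map by (subst prod.reindex) (auto intro: inj_on_subset[OF inj_skip_label])
  also have "\<dots> = esc_weight M w" by (simp only: count_v esc_weight_def)
  finally show ?thesis .
qed

lemma prob_ESC_join_cluster:
  assumes "pmf M 0 = 0" "0 < pmf M 1"
    and "w \<in> allocations (n - 1)" "i < n" "j \<in> {1..card (set w)}"
  shows "measure_pmf.prob (ESC n M)
      {z. compress (del_at i z) = w \<and> (\<exists>m<length w. w ! m = j \<and> z ! i = del_at i z ! m)}
    = esc_weight M (insert_at i j w) / esc_norm n M"
  using prob_ESC[OF assms(1,2)] join_cluster_allocations[OF assms(3-5)] by simp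

lemma prob_ESC_new_cluster:
  assumes "pmf M 0 = 0" "0 < pmf M 1" and "w \<in> allocations (n - 1)" "i < n"
  shows "measure_pmf.prob (ESC n M) {z. compress (del_at i z) = w \<and> z ! i \<notin> set (del_at i z)}
    = (real (card (set w)) + 1) * cluster_factor M 1 * esc_weight M w / esc_norm n M"
proof -
  have "i \<le> length w" using assms(3,4) by (simp add: allocations_def)
  then have "inj_on (\<lambda>l. insert_at i l (map (skip_label l) w)) {1..card (set w) + 1}"
    by (metis (no_types, lifting) inj_onI length_map nth_insert_at)
  then show ?thesis
    using prob_ESC[OF assms(1,2)] new_cluster_allocations[OF assms(3,4)]
    by (simp add: sum.reindex esc_weight_insert_at_new)
qed

section \<open>The zero-truncated negative binomial law\<close>

context
  fixes r p :: real
  assumes r: "0 < r" and p: "0 < p" "p < 1"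
begin

lemma powr_one_minus_bounds: "0 < (1 - p) powr r" "(1 - p) powr r < 1"
proof -
  show "0 < (1 - p) powr r" using p by simp
  have "(1 - p) powr r < 1 powr r" using r p by (intro powr_less_mono2) auto
  then show "(1 - p) powr r < 1" by simp
qed

lemma ztnb_gamma_pos: "0 < ztnb_gamma r p"
  using powr_one_minus_bounds by (simp add: ztnb_gamma_def)

text \<open>The generalised binomial series of \<open>(1 - p) powr -r\<close> in powers of p, with its constant
term 1 removed and rescaled by \<open>ztnb_gamma r p\<close>.\<close>

lemma ztnb_mu_sums: "ztnb_mu r p sums 1"
proof -
  define a where "a = (\<lambda>s::nat. Gamma (real s + r) * p ^ s / (Gamma r * fact s))"
  have rn: "r \<notin> \<int>\<^sub>\<le>\<^sub>0" using r nonpos_Ints_nonpos by fastforce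
  have Gr: "0 < Gamma r" using r by simp
  have a_eq: "a = (\<lambda>s. ((- r) gchoose s) * (- p) ^ s)"
  proof (rule ext)
    fix s
    have "Gamma (real s + r) = pochhammer r s * Gamma r"
      using pochhammer_Gamma[OF rn, of s] Gr by (simp add: add.commute field_simps)
    moreover have "((- r) gchoose s) * (- p) ^ s = pochhammer r s * p ^ s / fact s"
      by (simp add: gbinomial_pochhammer power_mult_distrib[symmetric])
    ultimately show "a s = ((- r) gchoose s) * (- p) ^ s"
      unfolding a_def using Gr by (simp add: field_simps)
  qed
  have "(\<lambda>s. ((- r) gchoose s) * (- p) ^ s) sums (1 + - p) powr (- r)"
    by (rule gen_binomial_real) (use p in simp)
  then have "a sums (1 / (1 - p) powr r)"
    unfolding a_eq by (simp add: powr_minus divide_inverse)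
  moreover have "a 0 = 1" using Gr by (simp add: a_def)
  ultimately have "(\<lambda>s. a (Suc s)) sums (1 / (1 - p) powr r - 1)"
    using sums_Suc_iff[of a] by simp
  then have "(\<lambda>s. ztnb_gamma r p * a (Suc s)) sums (ztnb_gamma r p * (1 / (1 - p) powr r - 1))"
    by (rule sums_mult)
  moreover have "ztnb_gamma r p * (1 / (1 - p) powr r - 1) = 1"
    using powr_one_minus_bounds by (simp add: ztnb_gamma_def field_simps)
  moreover have "ztnb_gamma r p * a (Suc s) = ztnb_mu r p (Suc s)" for s
    by (simp add: ztnb_mu_def a_def)
  ultimately have "(\<lambda>s. ztnb_mu r p (Suc s)) sums 1" by simp
  then show ?thesis using sums_Suc_iff[of "ztnb_mu r p" 1] by (simp add: ztnb_mu_def)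
qed

lemma ztnb_mu_nonneg: "0 \<le> ztnb_mu r p s"
proof -
  have "0 < Gamma (real s + r)" "0 < Gamma r" using r by simp_all
  then show ?thesis using ztnb_gamma_pos p by (simp add: ztnb_mu_def)
qed

lemma pmf_ztnb_pmf: "pmf (ztnb_pmf r p) s = ztnb_mu r p s"
  unfolding ztnb_pmf_def
proof (rule pmf_embed_pmf)
  have "(\<integral>\<^sup>+x. ennreal (ztnb_mu r p x) \<partial>count_space UNIV) = (\<Sum>x. ennreal (ztnb_mu r p x))"
    by (rule nn_integral_count_space_nat)
  also have "\<dots> = ennreal 1"
    using ztnb_mu_sums ztnb_mu_nonneg by (subst suminf_ennreal2) (auto simp: sums_iff)
  finally show "(\<integral>\<^sup>+x. ennreal (ztnb_mu r p x) \<partial>count_space UNIV) = 1" by simp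
qed (rule ztnb_mu_nonneg)

lemma cluster_factor_ztnb:
  "1 \<le> s \<Longrightarrow> cluster_factor (ztnb_pmf r p) s = ztnb_gamma r p * Gamma (real s + r) * p ^ s / Gamma r"
  by (simp add: cluster_factor_def pmf_ztnb_pmf ztnb_mu_def)

lemma cluster_factor_ztnb_pos: "1 \<le> s \<Longrightarrow> 0 < cluster_factor (ztnb_pmf r p) s"
  using cluster_factor_ztnb ztnb_gamma_pos r p by simp

lemma cluster_factor_ztnb_Suc:
  assumes "1 \<le> s"
  shows "cluster_factor (ztnb_pmf r p) (Suc s) = cluster_factor (ztnb_pmf r p) s * ((real s + r) * p)"
proof -
  have "real s + r \<notin> \<int>\<^sub>\<le>\<^sub>0" using r nonpos_Ints_nonpos by fastforce
  then have "Gamma (real (Suc s) + r) = (real s + r) * Gamma (real s + r)"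
    using Gamma_plus1[of "real s + r"] by (simp add: add_ac)
  then show ?thesis using cluster_factor_ztnb[OF assms] cluster_factor_ztnb[of "Suc s"]
    by (simp add: field_simps)
qed

lemma cluster_factor_ztnb_one: "cluster_factor (ztnb_pmf r p) 1 = ztnb_gamma r p * r * p"
proof -
  have "r \<notin> \<int>\<^sub>\<le>\<^sub>0" using r nonpos_Ints_nonpos by fastforce
  then have "Gamma (1 + r) = r * Gamma r" using Gamma_plus1[of r] by (simp add: add_ac)
  then show ?thesis using cluster_factor_ztnb[of 1] Gamma_real_pos[OF r] by (simp add: field_simps)
qed

lemma esc_weight_ztnb_pos: "0 < esc_weight (ztnb_pmf r p) w"
  unfolding esc_weight_def by (intro prod_pos cluster_factor_ztnb_pos) (simp add: Suc_le_eq)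

lemma esc_weight_ztnb_insert_at_old:
  assumes "j \<in> set w"
  shows "esc_weight (ztnb_pmf r p) (insert_at i j w)
       = esc_weight (ztnb_pmf r p) w * ((real (count (mset w) j) + r) * p)"
proof -
  let ?M = "ztnb_pmf r p" and ?c = "count (mset w) j"
  have c: "1 \<le> ?c" using assms by (simp add: Suc_le_eq)
  have "esc_weight ?M (insert_at i j w) * cluster_factor ?M ?c
      = esc_weight ?M w * ((real ?c + r) * p) * cluster_factor ?M ?c"
    using esc_weight_insert_at_old[OF assms, of ?M i] cluster_factor_ztnb_Suc[OF c]
    by (simp add: ac_simps)
  then show ?thesis using cluster_factor_ztnb_pos[OF c] by simp
qed

end

theorem mainTheorem6:
  fixes r p :: real and n i :: nat and w :: "nat list"
  assumes "0 < r" and "0 < p" and "p < 1" and "i < n"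
    and "measure_pmf.prob (ESC n (ztnb_pmf r p)) {z. compress (del_at i z) = w} > 0"
  shows "\<exists>c>0.
     (\<forall>j\<in>{1..card (set w)}.
        measure_pmf.prob (ESC n (ztnb_pmf r p))
          {z. compress (del_at i z) = w \<and> (\<exists>m<length w. w ! m = j \<and> z ! i = del_at i z ! m)}
        / measure_pmf.prob (ESC n (ztnb_pmf r p)) {z. compress (del_at i z) = w}
        = c * (real (count (mset w) j) + r))
   \<and> measure_pmf.prob (ESC n (ztnb_pmf r p))
          {z. compress (del_at i z) = w \<and> z ! i \<notin> set (del_at i z)}
        / measure_pmf.prob (ESC n (ztnb_pmf r p)) {z. compress (del_at i z) = w}
        = c * ((real (card (set w)) + 1) * ztnb_gamma r p * r)"
proof -
  let ?M = "ztnb_pmf r p"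
  let ?T = "measure_pmf.prob (ESC n ?M) {z. compress (del_at i z) = w}"
  have M0: "pmf ?M 0 = 0" and M1: "0 < pmf ?M 1"
    using assms(1-3) cluster_factor_ztnb_pos[of r p 1]
    by (simp_all add: pmf_ztnb_pmf ztnb_mu_def cluster_factor_def)
  have norm: "0 < esc_norm n ?M" by (rule esc_norm_pos[OF M1])
  have "{z. compress (del_at i z) = w} \<inter> allocations n \<noteq> {}"
    using assms(5) prob_ESC[OF M0 M1, of n "{z. compress (del_at i z) = w}"] by auto
  then obtain z where "z \<in> allocations n" "compress (del_at i z) = w" by blast
  then have w: "w \<in> allocations (n - 1)" using compress_del_at_allocation assms(4) by blast
  define c where "c = p * esc_weight ?M w / (esc_norm n ?M * ?T)"
  have "0 < c" using assms esc_weight_ztnb_pos norm by (simp add: c_def)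
  moreover have "measure_pmf.prob (ESC n ?M)
      {z. compress (del_at i z) = w \<and> (\<exists>m<length w. w ! m = j \<and> z ! i = del_at i z ! m)} / ?T
      = c * (real (count (mset w) j) + r)" if j: "j \<in> {1..card (set w)}" for j
  proof -
    have "set w = {1..card (set w)}" using w by (simp add: allocations_def)
    with j have "j \<in> set w" by metis
    then show ?thesis using prob_ESC_join_cluster[OF M0 M1 w assms(4) j] assms(1-3)
      by (simp add: esc_weight_ztnb_insert_at_old c_def)
  qed
  moreover have "measure_pmf.prob (ESC n ?M)
      {z. compress (del_at i z) = w \<and> z ! i \<notin> set (del_at i z)} / ?T
      = c * ((real (card (set w)) + 1) * ztnb_gamma r p * r)"
    using prob_ESC_new_cluster[OF M0 M1 w assms(4)] cluster_factor_ztnb_one[OF assms(1-3)]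
    by (simp add: c_def)
  ultimately show ?thesis by blast
qed

end
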